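(* Let $u\in[0,1]$, $s\geq 1$, and for $x\in(0,1)$ define $$g_{u,s}(x)=\frac{s}{2}\log(1-ux^2)+\log\left(\frac{\operatorname{arth}(x)}{x}\right),$$ where $\operatorname{arth}(x)=\frac12\log\frac{1+x}{1-x}$ is the inverse hyperbolic tangent. Then $g_{u,s}(x)>0$ for all $x\in(0,1)$ if and only if $3su\leq 2$. *)

theory Defs
  imports Complex_Main
begin

definition g :: "real \<Rightarrow> real \<Rightarrow> real \<Rightarrow> real" where
  "g u s x = s / 2 * ln (1 - u * x\<^sup>2) + ln (artanh x / x)"

end

theory Submission
  imports Defs
begin

text \<open>
  Sufficiency combines two inequalities: \<open>artanh x / x > 1 / sqrt (1 - 2x\<^sup>2/3)\<close>,
  and the logarithmic form \<open>ln (1 - s t) \<le> s ln (1 - t)\<close> of Bernoulli's inequality for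
  \<open>s \<ge> 1\<close>, applied with \<open>t = u x\<^sup>2\<close>, where \<open>s t \<le> 2x\<^sup>2/3\<close> exactly when \<open>3su \<le> 2\<close>.
  Necessity: \<open>ln y \<le> y - 1\<close> and \<open>artanh x \<le> x + x\<^sup>3/(3(1 - x\<^sup>2))\<close> give
  \<open>g u s x \<le> x\<^sup>2 (1/(3(1 - x\<^sup>2)) - su/2)\<close>, which is negative for small \<open>x\<close> when \<open>3su > 2\<close>.
\<close>

lemma ln_one_minus_mult_le_mult_ln:
  fixes s t :: real
  assumes "0 \<le> t" "1 \<le> s" "s * t < 1"
  shows "ln (1 - s * t) \<le> s * ln (1 - t)"
proof -
  define h where "h v = v * ln (1 - t) - ln (1 - v * t)" for v
  have t1: "t < 1"
    using assms mult_right_mono[of 1 s t] by simp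
  have "h 1 \<le> h s"
  proof (rule DERIV_nonneg_imp_nondecreasing[OF assms(2)])
    fix v assume v: "1 \<le> v" "v \<le> s"
    have "t \<le> v * t" "v * t \<le> s * t"
      using v assms mult_right_mono[of 1 v t] mult_right_mono[of v s t] by simp_all
    then have vt: "0 < 1 - v * t" "1 - v * t \<le> 1 - t"
      using assms by simp_all
    have "(h has_real_derivative ln (1 - t) + t / (1 - v * t)) (at v)"
      unfolding h_def using vt
      by (auto intro!: derivative_eq_intros simp: field_simps)
    moreover have "- (t / (1 - t)) \<le> ln (1 - t)"
      using ln_le_minus_one[of "1 / (1 - t)"] t1 by (simp add: ln_div field_simps)
    moreover have "t / (1 - t) \<le> t / (1 - v * t)"
      using vt assms(1) by (simp add: frac_le)
    ultimately show "\<exists>y. (h has_real_derivative y) (at v) \<and> 0 \<le> y"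
      by (intro exI conjI) auto
  qed
  then show ?thesis
    by (simp add: h_def)
qed

lemma div_sqrt_less_artanh:
  fixes x :: real
  assumes "0 < x" "x < 1"
  shows "x / sqrt (1 - 2 * x^2 / 3) < artanh x"
proof -
  define f where "f t = artanh t - t / sqrt (1 - 2 * t^2 / 3)" for t :: real
  have "f 0 < f x"
  proof (rule DERIV_pos_imp_increasing_open[OF assms(1)])
    fix t :: real
    assume t: "0 < t" "t < x"
    then have t2: "t^2 < 1"
      using assms by (simp add: power2_less_1_iff)
    define q where "q = 1 - 2 * t^2 / 3"
    have q: "0 < q"
      using t2 by (simp add: q_def)
    have "q^3 - (1 - t^2)^2 = t^4 * (9 - 8 * t^2) / 27"
      by (simp add: q_def power2_eq_square power3_eq_cube power4_eq_xxxx field_simps)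
    also have "\<dots> > 0"
      using t t2 by simp
    also have "q^3 = (q * sqrt q)^2"
      using q by (simp add: power_mult_distrib power3_eq_cube power2_eq_square)
    finally have "(1 - t^2)^2 < (q * sqrt q)^2"
      by simp
    then have "1 - t^2 < q * sqrt q"
      using q by (simp add: power2_less_imp_less)
    then have "1 / (q * sqrt q) < 1 / (1 - t^2)"
      using t2 by (simp add: frac_less2)
    moreover have "(f has_real_derivative 1 / (1 - t^2) - 1 / (q * sqrt q)) (at t)"
      unfolding f_def q_def using t t2 q[unfolded q_def] assms
      by (auto intro!: derivative_eq_intros simp: field_simps power2_eq_square)
    ultimately show "\<exists>y. (f has_real_derivative y) (at t) \<and> 0 < y"
      by (intro exI conjI) auto
  next
    have "\<forall>t\<in>{0..x}. \<bar>t\<bar> < 1 \<and> 0 < 1 - 2 * t^2 / 3"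
    proof
      fix t :: real
      assume "t \<in> {0..x}"
      then have "\<bar>t\<bar> < 1"
        using assms by simp
      then show "\<bar>t\<bar> < 1 \<and> 0 < 1 - 2 * t^2 / 3"
        by (simp add: abs_square_less_1[symmetric])
    qed
    then show "continuous_on {0..x} f"
      unfolding f_def by (intro continuous_intros) auto
  qed
  then show ?thesis
    by (simp add: f_def)
qed

lemma artanh_le_cubic:
  fixes x :: real
  assumes "0 \<le> x" "x < 1"
  shows "artanh x \<le> x + x^3 / (3 * (1 - x^2))"
proof -
  define f where "f t = t + t^3 / (3 * (1 - t^2)) - artanh t" for t :: real
  have "f 0 \<le> f x"
  proof (rule DERIV_nonneg_imp_nondecreasing[OF assms(1)])
    fix t :: real
    assume "0 \<le> t" "t \<le> x"
    then have t: "\<bar>t\<bar> < 1" "t^2 < 1"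
      using assms by (auto simp: power2_less_1_iff)
    have "1 + (3 * t^2 * (3 - 3 * t^2) + t^3 * (6 * t)) / ((3 - 3 * t^2) * (3 - 3 * t^2))
        - 1 / (1 - t^2) = 2 * t^4 / (3 * (1 - t^2)^2)"
      using t by (simp add: divide_simps) algebra
    then have "(f has_real_derivative 2 * t^4 / (3 * (1 - t^2)^2)) (at t)"
      unfolding f_def using t by (auto intro!: derivative_eq_intros)
    then show "\<exists>y. (f has_real_derivative y) (at t) \<and> 0 \<le> y"
      by (intro exI conjI) auto
  qed
  then show ?thesis
    by (simp add: f_def)
qed

lemma g_pos:
  fixes u s x :: real
  assumes "0 \<le> u" "1 \<le> s" "3 * s * u \<le> 2" "0 < x" "x < 1"
  shows "0 < g u s x"
proof -
  define q where "q = 1 - 2 * x^2 / 3"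
  have x2: "0 < x^2" "x^2 < 1"
    using assms by (simp_all add: power2_less_1_iff)
  then have q: "0 < q"
    by (simp add: q_def)
  have "s * (u * x^2) \<le> 2 * x^2 / 3"
    using mult_right_mono[of "3 * s * u" 2 "x^2"] assms(3) x2 by simp
  then have "ln q \<le> ln (1 - s * (u * x^2))"
    using q by (simp add: q_def)
  also have "\<dots> \<le> s * ln (1 - u * x^2)"
    using ln_one_minus_mult_le_mult_ln[of "u * x^2" s] \<open>s * (u * x^2) \<le> 2 * x^2 / 3\<close> x2 assms
    by simp
  finally have ln_q: "ln q \<le> s * ln (1 - u * x^2)" .
  have "1 / sqrt q < artanh x / x"
    using div_sqrt_less_artanh[OF assms(4,5)] assms(4) by (simp add: q_def field_simps)
  then have "ln (1 / sqrt q) < ln (artanh x / x)"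
    using q by (subst ln_less_cancel_iff) (auto intro: less_trans[rotated])
  moreover have "ln (1 / sqrt q) = - ln q / 2"
    using q by (simp add: ln_div ln_sqrt)
  ultimately show ?thesis
    using ln_q by (simp add: g_def)
qed

lemma g_le_quadratic:
  fixes u s x :: real
  assumes "0 \<le> u" "u \<le> 1" "0 \<le> s" "0 < x" "x < 1"
  shows "g u s x \<le> x^2 * (1 / (3 * (1 - x^2)) - s * u / 2)"
proof -
  have x2: "0 < x^2" "x^2 < 1"
    using assms by (simp_all add: power2_less_1_iff)
  moreover have "u * x^2 \<le> x^2"
    using mult_right_mono[of u 1 "x^2"] assms by simp
  ultimately have "u * x^2 < 1"
    by linarith
  then have "ln (1 - u * x^2) \<le> - (u * x^2)"
    using ln_le_minus_one[of "1 - u * x^2"] by simp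
  then have ln_factor: "s / 2 * ln (1 - u * x^2) \<le> s / 2 * - (u * x^2)"
    using assms(3) by (intro mult_left_mono) simp_all
  have "0 < x / sqrt (1 - 2 * x^2 / 3)"
    using assms(4) x2 by simp
  then have "0 < artanh x"
    using div_sqrt_less_artanh[OF assms(4,5)] by linarith
  then have "ln (artanh x / x) \<le> artanh x / x - 1"
    using assms(4) by (intro ln_le_minus_one) simp
  also have "artanh x / x \<le> 1 + x^2 / (3 * (1 - x^2))"
    using divide_right_mono[OF artanh_le_cubic[of x], of x] assms x2
    by (simp add: field_simps power2_eq_square power3_eq_cube)
  finally have "g u s x \<le> s / 2 * - (u * x^2) + x^2 / (3 * (1 - x^2))"
    using ln_factor by (simp add: g_def)
  also have "\<dots> = x^2 * (1 / (3 * (1 - x^2)) - s * u / 2)"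
    by (simp add: algebra_simps)
  finally show ?thesis .
qed

lemma exists_g_neg:
  fixes u s :: real
  assumes "0 \<le> u" "u \<le> 1" "0 \<le> s" "2 < 3 * s * u"
  obtains x where "0 < x" "x < 1" "g u s x < 0"
proof
  define c where "c = 2 / (3 * s * u)"
  have c: "0 < c" "c < 1"
    using assms by (simp_all add: c_def)
  define x where "x = sqrt ((1 - c) / 2)"
  have x2: "x^2 = (1 - c) / 2"
    using c by (simp add: x_def)
  show x: "0 < x" "x < 1"
    using c by (simp_all add: x_def)
  have "1 / (3 * (1 - x^2)) < 1 / (3 * c)"
    using c x2 by (simp add: frac_less2)
  also have "\<dots> = s * u / 2"
    using assms by (simp add: c_def)
  finally have "x^2 * (1 / (3 * (1 - x^2)) - s * u / 2) < 0"
    using x by (simp add: mult_pos_neg)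
  then show "g u s x < 0"
    using g_le_quadratic[OF assms(1-3) x] by linarith
qed

theorem lemma2p2:
  fixes u s :: real
  assumes "0 \<le> u" and "u \<le> 1" and "s \<ge> 1"
  shows "(\<forall>x. 0 < x \<and> x < 1 \<longrightarrow> g u s x > 0) \<longleftrightarrow> 3 * s * u \<le> 2"
proof
  assume pos: "\<forall>x. 0 < x \<and> x < 1 \<longrightarrow> g u s x > 0"
  show "3 * s * u \<le> 2"
  proof (rule ccontr)
    assume "\<not> 3 * s * u \<le> 2"
    then obtain x where "0 < x" "x < 1" "g u s x < 0"
      using exists_g_neg[of u s] assms by auto
    with pos show False
      by auto
  qed
next
  assume "3 * s * u \<le> 2"
  then show "\<forall>x. 0 < x \<and> x < 1 \<longrightarrow> g u s x > 0"
    using g_pos assms by blast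
qed

end
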